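(* Let $k\in\mathbb{N}$ with $\gcd(k,6)=2$, let $h$ be an integer with $\gcd(h,k)=1$, and let $h'$ be an integer with $hh'\equiv-1\pmod{4k}$ and $3\mid h'$. Then $$\frac{\omega_{3h,\frac{k}{2}}\,\omega_{h,\frac{k}{2}}\,\omega_{h,k}}{\omega_{3h,k}}=\exp\!\left( \frac{2\pi i}{36k} \left( h (9+9k) + h'(-5+2k^2) \right)\right)$$ and $$\frac{\omega_{3h,k}\,\omega_{h,\frac{k}{2}}\,\omega_{h,k}}{\omega_{3h,\frac{k}{2}}^3} =-\exp\!\left( -\frac{2\pi i}{18k} \left(h ( 9+9k) + h'(1-k^2) \right)\right).$$
   Context: For coprime integers $h$ and $K\ge1$, $\omega_{h,K}=\exp(\pi i\, s(h,K))$, where $s(h,K)=\sum_{r=1}^{K-1}\frac{r}{K}\left(\frac{hr}{K}-\lfloor \frac{hr}{K}\rfloor-\frac12\right)$ is the Dedekind sum (the multiplier of the Dedekind eta function; equivalently given by Rademacher's explicit formula in terms of Kronecker symbols and an integer $\tilde h$ with $h\tilde h\equiv-1\pmod K$). *)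

theory Defs
  imports "HOL-Analysis.Analysis" "HOL-Number_Theory.Cong"
begin

definition dedekind_sum :: "int \<Rightarrow> nat \<Rightarrow> real" where
  "dedekind_sum h K = (\<Sum>r=1..<K. (real r / real K) *
      (real_of_int (h * int r) / real K - real_of_int \<lfloor>real_of_int (h * int r) / real K\<rfloor> - 1/2))"

definition omega :: "int \<Rightarrow> nat \<Rightarrow> complex" where
  "omega h K = exp (complex_of_real pi * \<i> * complex_of_real (dedekind_sum h K))"

end

theory Submission
  imports Defs
begin

text \<open>Write \<open>k = 2 m\<close> and \<open>h' = 3 g\<close>. Since \<open>12 c s(d, c)\<close> is an integer, each identity says that
  \<open>48 m\<close> divides an explicit integer combination of these numerators for \<open>(d, c) = (3h, m)\<close>,
  \<open>(h, m)\<close>, \<open>(h, 2m)\<close>, \<open>(3h, 2m)\<close>. After reducing \<open>h\<close> modulo \<open>4k\<close> to a positive \<open>H\<close>, Dedekind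
  reciprocity rewrites \<open>3H\<close> times this combination in terms of the reciprocal sums \<open>s(m, 3H)\<close>,
  \<open>s(m, H)\<close>, \<open>s(2m, H)\<close>, \<open>s(2m, 3H)\<close>. Modulo \<open>16 m\<close> only the parities of \<open>A(m, c) + A(2m, c)\<close>
  then matter, where \<open>A(d, c) = \<Sum> r \<lfloor>d r / c\<rfloor>\<close> and \<open>c = H, 3H\<close>; they follow from a reflection
  argument in the style of Gauss' lemma. Divisibility by 3 comes from \<open>3 \<nmid> m\<close>.\<close>

definition floor_sum :: "int \<Rightarrow> nat \<Rightarrow> int" where
  "floor_sum d c = (\<Sum>r=1..<c. int r * (d * int r div int c))"

definition dedekind_num :: "int \<Rightarrow> nat \<Rightarrow> int" where
  "dedekind_num d c = 2 * d * (int c - 1) * (2 * int c - 1) - 12 * floor_sum d c - 3 * int c * (int c - 1)"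

lemma double_sum_atLeast1_lessThan:
  "2 * (\<Sum>r=1..<c. of_nat r) = (of_nat c * (of_nat c - 1) :: 'a :: comm_ring_1)"
  by (induction c) (auto simp: algebra_simps)

lemma six_sum_squares_atLeast1_lessThan:
  "6 * (\<Sum>r=1..<c. of_nat r ^ 2) = (of_nat c * (of_nat c - 1) * (2 * of_nat c - 1) :: 'a :: comm_ring_1)"
  by (induction c) (auto simp: algebra_simps power2_eq_square)

lemma dedekind_sum_eq_num:
  assumes "c > 0"
  shows "dedekind_sum d c = dedekind_num d c / (12 * real c)"
proof -
  have floor_eq: "\<lfloor>real_of_int (d * int r) / real c\<rfloor> = d * int r div int c" for r
    using floor_divide_of_int_eq[of "d * int r" "int c"] by simp
  have "dedekind_sum d c = (\<Sum>r=1..<c. d / (real c)^2 * (real r)^2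
      - 1 / real c * (int r * (d * int r div int c)) - 1 / (2 * real c) * real r)"
    unfolding dedekind_sum_def floor_eq
    by (rule sum.cong) (auto simp: field_simps power2_eq_square)
  also have "\<dots> = d / (real c)^2 * (\<Sum>r=1..<c. (real r)^2)
      - 1 / real c * floor_sum d c - 1 / (2 * real c) * (\<Sum>r=1..<c. real r)"
    by (simp add: floor_sum_def sum_subtractf sum_distrib_left)
  also have "\<dots> = dedekind_num d c / (12 * real c)"
  proof -
    have sum_id: "(\<Sum>r=1..<c. real r) = real c * (real c - 1) / 2"
      using double_sum_atLeast1_lessThan[of c, where 'a = real] by simp
    have sum_sq: "(\<Sum>r=1..<c. (real r)^2) = real c * (real c - 1) * (2 * real c - 1) / 6"
      using six_sum_squares_atLeast1_lessThan[of c, where 'a = real] by simp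
    show ?thesis
      unfolding sum_id sum_sq using assms by (simp add: dedekind_num_def field_simps power2_eq_square)
  qed
  finally show ?thesis .
qed

lemma dedekind_num_shift:
  assumes "c > 0"
  shows "dedekind_num (d + int c * t) c = dedekind_num d c"
proof -
  have "(d + int c * t) * int r div int c = d * int r div int c + t * int r" for r
  proof -
    have "(d + int c * t) * int r = d * int r + t * int r * int c"
      by (simp add: algebra_simps)
    then show ?thesis
      using assms by simp
  qed
  then have "floor_sum (d + int c * t) c = floor_sum d c + t * (\<Sum>r=1..<c. int r ^ 2)"
    by (simp add: floor_sum_def algebra_simps power2_eq_square sum.distrib sum_distrib_left)
  then have "12 * floor_sum (d + int c * t) c = 12 * floor_sum d c + 2 * t * (6 * (\<Sum>r=1..<c. int r ^ 2))"
    by simp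
  then show ?thesis
    unfolding six_sum_squares_atLeast1_lessThan dedekind_num_def by (simp add: algebra_simps)
qed

lemma three_dvd_dedekind_num:
  assumes "\<not> 3 dvd c"
  shows "3 dvd dedekind_num d c"
proof -
  have "3 dvd int c - 1 \<or> 3 dvd 2 * int c - 1"
    using assms by presburger
  then have "3 dvd (int c - 1) * (2 * int c - 1)"
    by auto
  then show ?thesis
    unfolding dedekind_num_def by (auto intro!: dvd_diff simp: mult.assoc)
qed

lemma bij_betw_mult_mod:
  fixes h k :: nat
  assumes "coprime h k"
  shows "bij_betw (\<lambda>x. h * x mod k) {1..<k} {1..<k}"
proof -
  have inj: "inj_on (\<lambda>x. h * x mod k) {1..<k}"
  proof (rule inj_onI)
    fix x y assume "x \<in> {1..<k}" "y \<in> {1..<k}" "h * x mod k = h * y mod k"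
    then have "[x = y] (mod k)"
      using assms by (simp add: cong_def[symmetric] cong_mult_lcancel_nat)
    then show "x = y"
      using \<open>x \<in> {1..<k}\<close> \<open>y \<in> {1..<k}\<close>
      by (simp add: cong_less_modulus_unique_nat)
  qed
  have "(\<lambda>x. h * x mod k) ` {1..<k} \<subseteq> {1..<k}"
  proof clarify
    fix x assume x: "x \<in> {1..<k}"
    have "\<not> k dvd x"
      using x by (auto dest: dvd_imp_le)
    then have "\<not> k dvd h * x"
      using assms by (simp add: coprime_commute coprime_dvd_mult_right_iff)
    then show "h * x mod k \<in> {1..<k}"
      using x by (auto simp: dvd_eq_mod_eq_0 intro: Suc_leI)
  qed
  then show ?thesis
    using inj endo_inj_surj[of "{1..<k}"] by (simp add: bij_betw_def)
qed

lemma floor_sum_of_nat: "floor_sum (int d) c = (\<Sum>r=1..<c. int r * int (d * r div c))"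
  unfolding floor_sum_def by (simp add: zdiv_int)

lemma sum_div_sq_by_residues:
  fixes h k :: nat
  assumes "coprime h k"
  shows "int k ^ 2 * (\<Sum>x=1..<k. int (h * x div k) ^ 2)
         = (1 - int h ^ 2) * (\<Sum>x=1..<k. int x ^ 2) + 2 * int h * int k * floor_sum (int h) k"
proof -
  define \<rho> where "\<rho> x = h * x mod k" for x
  have quotient: "int k * int (h * x div k) = int h * int x - int (\<rho> x)" for x
  proof -
    have "int (k * (h * x div k) + \<rho> x) = int (h * x)"
      unfolding \<rho>_def by simp
    then show ?thesis
      by simp
  qed
  have residues_sq: "(\<Sum>x=1..<k. int (\<rho> x) ^ 2) = (\<Sum>x=1..<k. int x ^ 2)"
    using sum.reindex_bij_betw[OF bij_betw_mult_mod[OF assms], of "\<lambda>x. int x ^ 2"]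
    unfolding \<rho>_def by simp
  have "int k * floor_sum (int h) k = (\<Sum>x=1..<k. int x * (int k * int (h * x div k)))"
    unfolding floor_sum_of_nat by (simp add: sum_distrib_left algebra_simps)
  also have "\<dots> = int h * (\<Sum>x=1..<k. int x ^ 2) - (\<Sum>x=1..<k. int x * int (\<rho> x))"
    unfolding quotient by (simp add: algebra_simps power2_eq_square sum_subtractf sum_distrib_left)
  finally have floor_sum_eq: "int k * floor_sum (int h) k
      = int h * (\<Sum>x=1..<k. int x ^ 2) - (\<Sum>x=1..<k. int x * int (\<rho> x))" .
  have "int k ^ 2 * (\<Sum>x=1..<k. int (h * x div k) ^ 2) = (\<Sum>x=1..<k. (int k * int (h * x div k)) ^ 2)"
    by (simp add: sum_distrib_left power_mult_distrib)
  also have "\<dots> = (\<Sum>x=1..<k. int h ^ 2 * int x ^ 2 - 2 * int h * (int x * int (\<rho> x))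
      + int (\<rho> x) ^ 2)"
    unfolding quotient by (simp add: power2_eq_square algebra_simps)
  also have "\<dots> = int h ^ 2 * (\<Sum>x=1..<k. int x ^ 2)
      - 2 * int h * (\<Sum>x=1..<k. int x * int (\<rho> x)) + (\<Sum>x=1..<k. int (\<rho> x) ^ 2)"
    by (simp add: sum.distrib sum_subtractf sum_distrib_left)
  also have "\<dots> = (1 - int h ^ 2) * (\<Sum>x=1..<k. int x ^ 2) + 2 * int h * int k * floor_sum (int h) k"
    unfolding residues_sq using floor_sum_eq by algebra
  finally show ?thesis .
qed

lemma sum_odd_numbers: "(\<Sum>y=1..q. 2 * y - 1) = q ^ 2" for q :: nat
  by (induction q) (auto simp: power2_eq_square)

lemma sum_if_le_odd_numbers:
  fixes n q :: nat
  assumes "q < n"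
  shows "(\<Sum>y=1..<n. if y \<le> q then 2 * y - 1 else 0) = q ^ 2"
proof -
  have "{y \<in> {1..<n}. y \<le> q} = {1..q}"
    using assms by auto
  then show ?thesis
    using sum.inter_filter[of "{1..<n}" "\<lambda>y. 2 * y - 1" "\<lambda>y. y \<le> q"] sum_odd_numbers
    by simp
qed

lemma sum_if_greater: "(\<Sum>x=1..<k. if p < x then c else 0) = c * (k - 1 - p)" for c k p :: nat
proof -
  have "{x \<in> {1..<k}. p < x} = {Suc p..<k}"
    by auto
  then show ?thesis
    using sum.inter_filter[of "{1..<k}" "\<lambda>_. c" "\<lambda>x. p < x"] by (simp add: mult.commute)
qed

lemma double_sum_div_coprime:
  fixes h k :: nat
  assumes "coprime k h"
  shows "2 * (\<Sum>y=1..<h. int (k * y div h)) = (int h - 1) * (int k - 1)"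
proof -
  have reflect: "int (k * (h - y) div h) = int k - 1 - int (k * y div h)" if y: "y \<in> {1..<h}" for y
  proof -
    have not_dvd: "\<not> int h dvd int k * int y"
      using assms y by (auto simp: coprime_commute coprime_dvd_mult_right_iff dest: dvd_imp_le)
    have "int (k * (h - y) div h) = (- (int k * int y) + int k * int h) div int h"
      using y by (simp add: zdiv_int of_nat_diff algebra_simps)
    also have "\<dots> = int k + - (int k * int y) div int h"
      using y by (intro div_mult_self1) simp
    also have "- (int k * int y) div int h = - (int k * int y div int h) - 1"
      using not_dvd y by (simp add: zdiv_zminus1_eq_if dvd_eq_mod_eq_0)
    finally show ?thesis
      by (simp add: zdiv_int)
  qed
  have "(\<Sum>y=1..<h. int (k * y div h)) = (\<Sum>y=1..<h. int (k * (h - y) div h))"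
    using sum.atLeastLessThan_rev[of "\<lambda>y. int (k * y div h)" 1 h] by simp
  also have "\<dots> = (\<Sum>y=1..<h. int k - 1 - int (k * y div h))"
    using reflect by (rule sum.cong[OF refl])
  also have "\<dots> = (int h - 1) * (int k - 1) - (\<Sum>y=1..<h. int (k * y div h))"
    using assms by (cases h) (simp_all add: sum_subtractf)
  finally show ?thesis
    by simp
qed

text \<open>Both sides count the pairs \<open>(x, y)\<close> with \<open>k y < h x\<close>, weighted by \<open>2 y - 1\<close>.\<close>
lemma sum_div_sq_by_counting:
  fixes h k :: nat
  assumes "coprime h k" "h > 0"
  shows "(\<Sum>x=1..<k. (h * x div k) ^ 2) = (\<Sum>y=1..<h. (2 * y - 1) * (k - 1 - k * y div h))"
proof -
  have below: "h * x div k < h" if "x \<in> {1..<k}" for x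
    using that assms by (simp add: div_less_iff_less_mult)
  have swap: "y \<le> h * x div k \<longleftrightarrow> k * y div h < x"
    if x: "x \<in> {1..<k}" and y: "y \<in> {1..<h}" for x y
  proof -
    have "\<not> k dvd h * x"
      using assms x by (auto simp: coprime_commute coprime_dvd_mult_right_iff dest: dvd_imp_le)
    then have "k * y \<noteq> h * x"
      by (metis dvd_triv_left)
    then have "y * k \<le> h * x \<longleftrightarrow> k * y < x * h"
      by (auto simp: mult.commute)
    then show ?thesis
      using x assms by (simp add: less_eq_div_iff_mult_less_eq div_less_iff_less_mult)
  qed
  have "(\<Sum>x=1..<k. (h * x div k) ^ 2)
      = (\<Sum>x=1..<k. \<Sum>y=1..<h. if y \<le> h * x div k then 2 * y - 1 else 0)"
    using below sum_if_le_odd_numbers by simp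
  also have "\<dots> = (\<Sum>y=1..<h. \<Sum>x=1..<k. if y \<le> h * x div k then 2 * y - 1 else 0)"
    by (rule sum.swap)
  also have "\<dots> = (\<Sum>y=1..<h. \<Sum>x=1..<k. if k * y div h < x then 2 * y - 1 else 0)"
    by (intro sum.cong refl) (simp add: swap)
  also have "\<dots> = (\<Sum>y=1..<h. (2 * y - 1) * (k - 1 - k * y div h))"
    by (intro sum.cong refl) (rule sum_if_greater)
  finally show ?thesis .
qed

lemma double_sum_div_sq:
  fixes h k :: nat
  assumes "coprime h k" "h > 0"
  shows "2 * (\<Sum>x=1..<k. int (h * x div k) ^ 2)
       = 2 * (int k - 1) * (int h - 1) ^ 2 - 4 * floor_sum (int k) h + (int h - 1) * (int k - 1)"
proof -
  have quotient_less: "k * y div h < k" if "y \<in> {1..<h}" for y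
  proof -
    have "k \<noteq> 0"
      using that assms(1) by (cases k) auto
    then show ?thesis
      using that by (simp add: div_less_iff_less_mult)
  qed
  have "(\<Sum>x=1..<k. int (h * x div k) ^ 2) = int (\<Sum>y=1..<h. (2 * y - 1) * (k - 1 - k * y div h))"
    unfolding sum_div_sq_by_counting[OF assms, symmetric] by simp
  also have "\<dots> = (\<Sum>y=1..<h. (2 * int y - 1) * (int k - 1) - 2 * (int y * int (k * y div h))
      + int (k * y div h))"
    unfolding of_nat_sum
  proof (rule sum.cong[OF refl])
    fix y assume "y \<in> {1..<h}"
    then have "int ((2 * y - 1) * (k - 1 - k * y div h)) = (2 * int y - 1) * (int k - 1 - int (k * y div h))"
      using quotient_less[of y] by (simp add: of_nat_diff Suc_le_eq)
    then show "int ((2 * y - 1) * (k - 1 - k * y div h))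
        = (2 * int y - 1) * (int k - 1) - 2 * (int y * int (k * y div h)) + int (k * y div h)"
      by (simp add: algebra_simps)
  qed
  also have "\<dots> = (2 * (\<Sum>y=1..<h. int y) - (int h - 1)) * (int k - 1) - 2 * floor_sum (int k) h
      + (\<Sum>y=1..<h. int (k * y div h))"
    using assms(2) by (simp add: sum.distrib sum_subtractf sum_distrib_left sum_distrib_right
        floor_sum_of_nat algebra_simps of_nat_diff)
  finally have sum_eq: "(\<Sum>x=1..<k. int (h * x div k) ^ 2)
      = (2 * (\<Sum>y=1..<h. int y) - (int h - 1)) * (int k - 1) - 2 * floor_sum (int k) h
        + (\<Sum>y=1..<h. int (k * y div h))" .
  have "coprime k h"
    using assms(1) by (simp add: coprime_commute)
  then show ?thesis
    using sum_eq double_sum_atLeast1_lessThan[of h, where 'a = int] double_sum_div_coprime[of k h]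
    by (simp, simp add: power2_eq_square algebra_simps)
qed

theorem dedekind_num_reciprocity:
  fixes h k :: nat
  assumes "coprime h k" "h > 0" "k > 0"
  shows "int h * dedekind_num (int h) k + int k * dedekind_num (int k) h
       = int h ^ 2 + int k ^ 2 + 1 - 3 * int h * int k"
proof -
  have "int k * (int h * dedekind_num (int h) k + int k * dedekind_num (int k) h)
      = int k * (int h ^ 2 + int k ^ 2 + 1 - 3 * int h * int k)"
    using sum_div_sq_by_residues[OF assms(1)] double_sum_div_sq[OF assms(1,2)]
      six_sum_squares_atLeast1_lessThan[of k, where 'a = int]
    unfolding dedekind_num_def by algebra
  then show ?thesis
    using assms by simp
qed

lemma cong_2_iff_even: "[a = b] (mod 2) \<longleftrightarrow> (even a \<longleftrightarrow> even b)" for a b :: nat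
  by (simp add: cong_def mod2_eq_if)

lemma sum_reflect_halves:
  fixes f :: "nat \<Rightarrow> 'a :: comm_semiring_1"
  assumes "\<And>x. x \<in> {1..<2*n+1} \<Longrightarrow> f (2*n+1 - x) = f x"
  shows "(\<Sum>x=1..<2*n+1. f x) = 2 * (\<Sum>x=1..n. f x)"
proof -
  have "{1..<2*n+1} = {1..n} \<union> {Suc n..<2*n+1}" "{1..n} \<inter> {Suc n..<2*n+1} = {}"
    by auto
  then have "(\<Sum>x=1..<2*n+1. f x) = (\<Sum>x=1..n. f x) + (\<Sum>x=Suc n..<2*n+1. f x)"
    by (simp add: sum.union_disjoint)
  also have "(\<Sum>x=Suc n..<2*n+1. f x) = (\<Sum>x=1..n. f (2*n+1 - x))"
    by (rule sum.reindex_bij_witness[of _ "\<lambda>x. 2*n+1 - x" "\<lambda>x. 2*n+1 - x"]) auto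
  also have "\<dots> = (\<Sum>x=1..n. f x)"
    using assms by (intro sum.cong) auto
  finally show ?thesis
    by (simp add: mult_2)
qed

lemma sum_odd_indices_reflect:
  fixes f \<rho> :: "nat \<Rightarrow> nat"
  assumes bij: "bij_betw \<rho> {1..<2*n+1} {1..<2*n+1}"
    and \<rho>_reflect: "\<And>r. r \<in> {1..<2*n+1} \<Longrightarrow> \<rho> (2*n+1 - r) = 2*n+1 - \<rho> r"
    and f_reflect: "\<And>x. x \<in> {1..<2*n+1} \<Longrightarrow> f (2*n+1 - x) = f x"
  shows "(\<Sum>r=1..<2*n+1. r mod 2 * f (\<rho> r)) = (\<Sum>x=1..n. f x)"
proof -
  define c where "c = 2*n+1"
  have "(\<Sum>r=1..<c. r mod 2 * f (\<rho> r)) = (\<Sum>r=1..<c. (c - r) mod 2 * f (\<rho> (c - r)))"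
    using sum.atLeastLessThan_rev[of "\<lambda>r. r mod 2 * f (\<rho> r)" 1 c] by simp
  also have "\<dots> = (\<Sum>r=1..<c. (1 - r mod 2) * f (\<rho> r))"
  proof (rule sum.cong[OF refl])
    fix r assume r: "r \<in> {1..<c}"
    then have "\<rho> r \<in> {1..<c}"
      using bij unfolding c_def by (auto dest: bij_betwE)
    moreover have "(c - r) mod 2 = 1 - r mod 2"
      using r unfolding c_def by (auto simp: mod2_eq_if even_diff_nat)
    ultimately show "(c - r) mod 2 * f (\<rho> (c - r)) = (1 - r mod 2) * f (\<rho> r)"
      using r \<rho>_reflect f_reflect unfolding c_def by simp
  qed
  finally have odd_eq_even: "(\<Sum>r=1..<c. r mod 2 * f (\<rho> r))
      = (\<Sum>r=1..<c. (1 - r mod 2) * f (\<rho> r))" .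
  have "(\<Sum>r=1..<c. r mod 2 * f (\<rho> r)) + (\<Sum>r=1..<c. (1 - r mod 2) * f (\<rho> r))
      = (\<Sum>r=1..<c. f (\<rho> r))"
    unfolding sum.distrib[symmetric] by (rule sum.cong) (auto simp: mod2_eq_if)
  then have "2 * (\<Sum>r=1..<c. r mod 2 * f (\<rho> r)) = (\<Sum>r=1..<c. f (\<rho> r))"
    using odd_eq_even by linarith
  also have "\<dots> = (\<Sum>x=1..<c. f x)"
    using sum.reindex_bij_betw[OF bij, of f] unfolding c_def by simp
  also have "\<dots> = 2 * (\<Sum>x=1..n. f x)"
    using sum_reflect_halves[of n f] f_reflect unfolding c_def by simp
  finally show ?thesis
    unfolding c_def by simp
qed

lemma double_div_odd:
  fixes c x :: nat
  assumes "x < c" "odd c"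
  shows "2 * x div c = (if c < 2 * x then 1 else 0)"
proof (cases "c < 2 * x")
  case True
  then show ?thesis
    using assms by (auto intro!: div_nat_eqI)
next
  case False
  then have "2 * x < c"
    using assms by (metis dvd_triv_left le_neq_implies_less not_less)
  then show ?thesis
    by simp
qed

lemma mult_diff_mod_reflect:
  fixes c d r :: nat
  assumes "coprime d c" "r \<in> {1..<c}"
  shows "d * (c - r) mod c = c - d * r mod c"
proof -
  have residues: "d * r mod c \<in> {1..<c}" "d * (c - r) mod c \<in> {1..<c}"
    using bij_betw_mult_mod[OF assms(1)] assms(2) by (auto dest: bij_betwE)
  have "(d * r mod c + d * (c - r) mod c) mod c = (d * r + d * (c - r)) mod c"
    by (simp add: mod_add_eq)
  also have "d * r + d * (c - r) = d * c"
    using assms(2) by (simp add: add_mult_distrib2[symmetric])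
  finally obtain t where t: "d * r mod c + d * (c - r) mod c = c * t"
    by (auto simp: dvd_eq_mod_eq_0[symmetric] elim: dvdE)
  have "0 < d * r mod c" "d * r mod c < c" "d * (c - r) mod c < c"
    using residues by auto
  then have "0 < c * t" "c * t < c * 2"
    unfolding t[symmetric] by linarith+
  then have "t = 1"
    by simp
  then show ?thesis
    using t by simp
qed

lemma sum_mod_2_atLeast1_atMost: "(\<Sum>x=1..m. x mod 2) = (m + 1) div 2" for m :: nat
  by (induction m) (simp_all, presburger)

lemma double_div_parity_reflect:
  fixes c x :: nat
  assumes "odd c" "x \<in> {1..<c}"
  shows "(c - x + 2 * (c - x) div c) mod 2 = (x + 2 * x div c) mod 2"
proof -
  have "c \<noteq> 2 * x" "c \<noteq> 2 * (c - x)"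
    using assms(1) by (metis dvd_triv_left)+
  then have "2 * (c - x) div c = 1 - 2 * x div c"
    using assms by (auto simp: double_div_odd)
  moreover have "even (c - x) \<longleftrightarrow> odd x"
    using assms by (simp add: even_diff_nat)
  moreover have "2 * x div c \<le> 1"
    using assms by (simp add: double_div_odd)
  ultimately show ?thesis
    by (auto simp: mod2_eq_if)
qed

lemma floor_pair_summand_parity:
  fixes c d r :: nat
  assumes "odd c"
  shows "[r * (d * r div c + 2 * d * r div c)
      = r mod 2 * (d + (d * r mod c + 2 * (d * r mod c) div c) mod 2)] (mod 2)"
proof -
  have "2 * d * r div c = 2 * (d * r div c) + 2 * (d * r mod c) div c"
    using div_mult1_eq[of 2 "d * r" c] by (simp add: mult.assoc)
  moreover have "even (c * (d * r div c) + d * r mod c) \<longleftrightarrow> even (d * r div c + d * r mod c)"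
    using assms by (simp only: even_add even_mult_iff) simp
  then have "even (d * r) \<longleftrightarrow> even (d * r div c + d * r mod c)"
    by simp
  ultimately show ?thesis
    unfolding cong_2_iff_even by auto
qed

text \<open>Modulo 2 only odd \<open>r\<close> contribute, and the reflection \<open>r \<mapsto> c - r\<close> shows that odd and even \<open>r\<close>
  contribute equally to the sum of the parities attached to the residues \<open>d r mod c\<close>.\<close>
lemma floor_sum_double_parity:
  fixes d n :: nat
  assumes "coprime d (2 * n + 1)"
  shows "[floor_sum (int d) (2 * n + 1) + floor_sum (2 * int d) (2 * n + 1)
      = int (d * n + n * (n + 1) div 2)] (mod 2)"
proof -
  define c where "c = 2 * n + 1"
  have c: "odd c" "coprime d c"
    using assms unfolding c_def by simp_all
  define f where "f x = (x + 2 * x div c) mod 2" for x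
  have sum_eq: "floor_sum (int d) c + floor_sum (2 * int d) c
      = int (\<Sum>r=1..<c. r * (d * r div c + 2 * d * r div c))"
    using floor_sum_of_nat[of d c] floor_sum_of_nat[of "2 * d" c] by (simp add: sum.distrib algebra_simps)
  have "[(\<Sum>r=1..<c. r * (d * r div c + 2 * d * r div c))
      = (\<Sum>r=1..<c. r mod 2 * (d + f (d * r mod c)))] (mod 2)"
    unfolding f_def using floor_pair_summand_parity[OF c(1)] by (rule cong_sum)
  also have "(\<Sum>r=1..<c. r mod 2 * (d + f (d * r mod c)))
      = d * (\<Sum>r=1..<c. r mod 2) + (\<Sum>r=1..<c. r mod 2 * f (d * r mod c))"
    by (simp add: sum.distrib sum_distrib_left algebra_simps)
  also have "(\<Sum>r=1..<c. r mod 2) = n"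
    using sum_mod_2_atLeast1_atMost[of "2 * n"] unfolding c_def
    by (simp add: atLeastLessThanSuc_atLeastAtMost)
  also have "(\<Sum>r=1..<c. r mod 2 * f (d * r mod c)) = (\<Sum>x=1..n. f x)"
    using sum_odd_indices_reflect[of "\<lambda>r. d * r mod c" n f] bij_betw_mult_mod[OF c(2)]
      mult_diff_mod_reflect[OF c(2)] double_div_parity_reflect[OF c(1)]
    unfolding c_def f_def by simp
  also have "(\<Sum>x=1..n. f x) = (\<Sum>x=1..n. x mod 2)"
    unfolding f_def c_def by (intro sum.cong refl) simp
  also have "[d * n + (\<Sum>x=1..n. x mod 2) = d * n + n * (n + 1) div 2] (mod 2)"
    using cong_sum[of "{1..n}" "\<lambda>x. x mod 2" "\<lambda>x. x" 2]
      gauss_sum_from_Suc_0[of n, where 'a = nat]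
    by (intro cong_add cong_refl) (simp add: cong_def)
  finally have "[int (\<Sum>r=1..<c. r * (d * r div c + 2 * d * r div c))
      = int (d * n + n * (n + 1) div 2)] (mod int 2)"
    by (simp only: cong_int_iff)
  then show ?thesis
    unfolding c_def[symmetric] sum_eq by (simp only: of_nat_numeral)
qed

text \<open>A polynomial identity: \<open>H\<close> is the reduced \<open>h\<close>, \<open>D1, ..., D4\<close> are the numerators of
  the four Dedekind sums, \<open>rec1, ..., rec4\<close> their reciprocity laws with the reciprocal numerators
  expanded in terms of the floor sums \<open>A1, ..., A4\<close>, and \<open>par1\<close>, \<open>par2\<close> all that is known
  about these.\<close>
lemma exponent_defect_identities:
  fixes H b T m g t D1 D2 D3 D4 A1 A2 A3 A4 w1 w2 :: int
  assumes H: "H = 2 * b + 1" and T: "b * (b + 1) = 2 * T"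
    and inverse: "3 * H * g = 8 * m * t - 1"
    and rec1: "3 * H * D1
        + m * (2 * m * (3 * H - 1) * (2 * (3 * H) - 1) - 12 * A1 - 3 * (3 * H) * (3 * H - 1))
      = (3 * H)^2 + m^2 + 1 - 3 * (3 * H) * m"
    and rec2: "H * D2 + m * (2 * m * (H - 1) * (2 * H - 1) - 12 * A2 - 3 * H * (H - 1))
      = H^2 + m^2 + 1 - 3 * H * m"
    and rec3: "H * D3 + 2 * m * (2 * (2 * m) * (H - 1) * (2 * H - 1) - 12 * A3 - 3 * H * (H - 1))
      = H^2 + (2 * m)^2 + 1 - 3 * H * (2 * m)"
    and rec4: "3 * H * D4
        + 2 * m * (2 * (2 * m) * (3 * H - 1) * (2 * (3 * H) - 1) - 12 * A4 - 3 * (3 * H) * (3 * H - 1))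
      = (3 * H)^2 + (2 * m)^2 + 1 - 3 * (3 * H) * (2 * m)"
    and par1: "A1 + A4 = m * (3 * b + 1) + 9 * T + 1 + 2 * w1"
    and par2: "A2 + A3 = m * b + T + 2 * w2"
  shows "3 * H * (2 * D1 + 2 * D2 + D3 - D4 - 2 * (H * (3 + 6 * m) + g * (8 * m^2 - 5)))
      = 16 * m * (18 * b * m - 9 * b + 18 * T + 6 * m - 8 * m^2 * t + 5 * t - 3 * A4 + 3 * w1 + 9 * w2 - 3)"
    and "3 * H * (D4 + 2 * D2 + D3 - 6 * D1 - 24 * m + 4 * (H * (3 + 6 * m) + g * (1 - 4 * m^2)))
      = 16 * m * (- 9 * b - 36 * T - 8 * m^2 * t + 2 * t + 6 * A4 - 9 * w1 + 9 * w2 - 9)"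
  using assms by algebra+

text \<open>With \<open>k = 2 m\<close> and \<open>h' = 3 g\<close>, \<open>exponent_defect\<^sub>i h g m / (24 m)\<close> is the difference of the
  exponents, in units of \<open>\<pi> \<i>\<close>, of the two sides of the \<open>i\<close>-th identity (the sign in the
  second one accounts for the term \<open>24 m\<close>), so the identity holds iff \<open>48 m\<close> divides it.\<close>
definition exponent_defect1 :: "int \<Rightarrow> int \<Rightarrow> nat \<Rightarrow> int" where
  "exponent_defect1 h g m = 2 * dedekind_num (3 * h) m + 2 * dedekind_num h m
      + dedekind_num h (2 * m) - dedekind_num (3 * h) (2 * m)
      - 2 * (h * (3 + 6 * int m) + g * (8 * int m ^ 2 - 5))"

definition exponent_defect2 :: "int \<Rightarrow> int \<Rightarrow> nat \<Rightarrow> int" where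
  "exponent_defect2 h g m = dedekind_num (3 * h) (2 * m) + 2 * dedekind_num h m
      + dedekind_num h (2 * m) - 6 * dedekind_num (3 * h) m - 24 * int m
      + 4 * (h * (3 + 6 * int m) + g * (1 - 4 * int m ^ 2))"

lemma three_dvd_exponent_defects:
  assumes "\<not> 3 dvd m"
  shows "3 dvd exponent_defect1 h g m" "3 dvd exponent_defect2 h g m"
proof -
  have "3 dvd int m - 1 \<or> 3 dvd int m + 1"
    using assms by presburger
  then have "3 dvd (int m - 1) * (int m + 1)"
    by auto
  then have "3 dvd int m ^ 2 - 1"
    by (simp add: power2_eq_square algebra_simps)
  then have "3 dvd 8 * int m ^ 2 - 5" "3 dvd 1 - 4 * int m ^ 2" "3 dvd 3 + 6 * int m" "3 dvd 24 * int m"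
    by presburger+
  moreover have "\<not> 3 dvd 2 * m"
    using assms by presburger
  ultimately show "3 dvd exponent_defect1 h g m" "3 dvd exponent_defect2 h g m"
    using three_dvd_dedekind_num[OF assms] three_dvd_dedekind_num[of "2 * m"]
    unfolding exponent_defect1_def exponent_defect2_def
    by - (assumption | rule dvd_diff dvd_add dvd_mult)+
qed

lemma floor_sum_double_parity_triple:
  fixes m b T :: nat
  assumes "coprime m (3 * (2 * b + 1))" "b * (b + 1) = 2 * T"
  shows "[floor_sum (int m) (3 * (2 * b + 1)) + floor_sum (2 * int m) (3 * (2 * b + 1))
      = int m * (3 * int b + 1) + 9 * int T + 1] (mod 2)"
proof -
  have triple: "3 * (2 * b + 1) = 2 * (3 * b + 1) + 1"
    by simp
  have "(3 * b + 1) * (3 * b + 1 + 1) = 9 * (b * (b + 1)) + 2"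
    by (simp add: algebra_simps)
  then have "int (m * (3 * b + 1) + (3 * b + 1) * (3 * b + 1 + 1) div 2)
      = int m * (3 * int b + 1) + 9 * int T + 1"
    unfolding assms(2) by (simp add: algebra_simps)
  moreover have "coprime m (2 * (3 * b + 1) + 1)"
    using assms(1) unfolding triple .
  ultimately show ?thesis
    unfolding triple by (metis floor_sum_double_parity)
qed

lemma dvd_48_cancel:
  fixes H m x :: int
  assumes "16 * m dvd 3 * H * x" "3 dvd x" "odd H" "coprime H m" "\<not> 3 dvd m"
  shows "48 * m dvd x"
proof -
  have "coprime 3 m"
    using assms(5) by (simp add: prime_imp_coprime)
  moreover have "coprime (2 ^ 4) (3 * H)"
    unfolding coprime_power_left_iff using assms(3) by simp
  ultimately have "coprime (16 * m) (3 * H)"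
    using assms(4) by (simp add: coprime_commute)
  then have "16 * m dvd x"
    using assms(1) by (simp add: coprime_dvd_mult_right_iff)
  moreover have "coprime (3::int) 16"
    by (rule prime_imp_coprime) simp_all
  then have "coprime 3 (16 * m)"
    using \<open>coprime 3 m\<close> by simp
  ultimately have "3 * (16 * m) dvd x"
    using divides_mult assms(2) by blast
  then show ?thesis
    by simp
qed

lemma exponent_defects_dvd_nat:
  fixes H m :: nat and g t :: int
  assumes cop: "coprime H (2 * m)" and m: "m > 0" "\<not> 3 dvd m"
    and inverse: "3 * int H * g = 8 * int m * t - 1"
  shows "48 * int m dvd exponent_defect1 (int H) g m" "48 * int m dvd exponent_defect2 (int H) g m"
proof -
  have "odd H"
    using cop by simp
  then obtain b where H: "H = 2 * b + 1"
    by (elim oddE)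
  have "even (b * (b + 1))"
    by simp
  then obtain T where T: "b * (b + 1) = 2 * T"
    by (elim evenE)
  then have HT: "int H = 2 * int b + 1" "int b * (int b + 1) = 2 * int T"
    unfolding H by (simp_all add: algebra_simps flip: of_nat_mult)
  have "coprime 3 m"
    using m(2) by (simp add: prime_imp_coprime_nat)
  then have coprimes: "coprime (3 * H) m" "coprime H m" "coprime H (2 * m)" "coprime (3 * H) (2 * m)"
    using cop by simp_all
  have pos: "3 * H > 0" "H > 0" "2 * m > 0"
    using H m(1) by simp_all
  note reciprocity = dedekind_num_reciprocity[OF coprimes(1) pos(1) m(1)]
    dedekind_num_reciprocity[OF coprimes(2) pos(2) m(1)] dedekind_num_reciprocity[OF coprimes(3) pos(2,3)]
    dedekind_num_reciprocity[OF coprimes(4) pos(1,3)]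
  obtain w1 where par1: "floor_sum (int m) (3 * H) + floor_sum (2 * int m) (3 * H)
      = int m * (3 * int b + 1) + 9 * int T + 1 + 2 * w1"
    using floor_sum_double_parity_triple[of m b T] coprimes(1) T
    unfolding H by (metis coprime_commute cong_sym cong_iff_lin)
  have "[floor_sum (int m) H + floor_sum (2 * int m) H = int (m * b + T)] (mod 2)"
    using floor_sum_double_parity[of m b] coprimes(2) T unfolding H by (simp add: coprime_commute)
  then obtain w2 where par2: "floor_sum (int m) H + floor_sum (2 * int m) H = int m * int b + int T + 2 * w2"
    by (metis cong_sym cong_iff_lin of_nat_add of_nat_mult)
  note identities = exponent_defect_identities[OF HT inverse
      reciprocity[unfolded dedekind_num_def[of "int m"] dedekind_num_def[of "2 * int m"]
        of_nat_mult of_nat_numeral]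
      par1 par2]
  have "16 * int m dvd 3 * int H * exponent_defect1 (int H) g m"
      "16 * int m dvd 3 * int H * exponent_defect2 (int H) g m"
    unfolding exponent_defect1_def exponent_defect2_def identities by simp_all
  moreover have "odd (int H)" "coprime (int H) (int m)" "\<not> 3 dvd int m"
    using \<open>odd H\<close> coprimes(2) m(2) by (simp_all, presburger)
  ultimately show "48 * int m dvd exponent_defect1 (int H) g m" "48 * int m dvd exponent_defect2 (int H) g m"
    using three_dvd_exponent_defects[OF m(2)] by (simp_all add: dvd_48_cancel)
qed

lemma exponent_defects_shift:
  assumes "m > 0"
  shows "exponent_defect1 (h + 8 * int m * s) g m
      = exponent_defect1 h g m - 48 * int m * (s * (1 + 2 * int m))" (is ?shift1)
    and "exponent_defect2 (h + 8 * int m * s) g m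
      = exponent_defect2 h g m + 96 * int m * (s * (1 + 2 * int m))" (is ?shift2)
proof -
  have "dedekind_num (3 * (h + 8 * int m * s)) m = dedekind_num (3 * h) m"
    using dedekind_num_shift[OF assms, of "3 * h" "24 * s"] by (simp add: algebra_simps)
  moreover have "dedekind_num (h + 8 * int m * s) m = dedekind_num h m"
    using dedekind_num_shift[OF assms, of h "8 * s"] by (simp add: algebra_simps)
  moreover have "dedekind_num (3 * (h + 8 * int m * s)) (2 * m) = dedekind_num (3 * h) (2 * m)"
    using dedekind_num_shift[of "2 * m" "3 * h" "12 * s"] assms by (simp add: algebra_simps)
  moreover have "dedekind_num (h + 8 * int m * s) (2 * m) = dedekind_num h (2 * m)"
    using dedekind_num_shift[of "2 * m" h "4 * s"] assms by (simp add: algebra_simps)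
  ultimately show ?shift1 ?shift2
    unfolding exponent_defect1_def exponent_defect2_def by (simp_all add: algebra_simps)
qed

lemma exponent_defects_dvd:
  fixes h g :: int and m :: nat
  assumes "coprime h (2 * int m)" "m > 0" "\<not> 3 dvd m" "[h * (3 * g) = -1] (mod 8 * int m)"
  shows "48 * int m dvd exponent_defect1 h g m" "48 * int m dvd exponent_defect2 h g m"
proof -
  define H where "H = nat (h mod (8 * int m))"
  define s where "s = h div (8 * int m)"
  have h: "h = int H + 8 * int m * s"
    unfolding H_def s_def using assms(2) by simp
  have "[h = int H] (mod 2 * int m)"
  proof -
    have "h = int H + 2 * int m * (4 * s)"
      unfolding h by simp
    then show ?thesis
      by (simp only: cong_def mod_mult_self2)
  qed
  then have "coprime (int H) (2 * int m)"
    using assms(1) by (rule cong_imp_coprime)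
  then have "coprime (int H) (int (2 * m))"
    by simp
  then have "coprime H (2 * m)"
    by (simp only: coprime_int_iff)
  moreover obtain t where "3 * int H * g = 8 * int m * t - 1"
  proof -
    have "h * (3 * g) = int H * (3 * g) + 8 * int m * (3 * g * s)"
      unfolding h by (simp add: algebra_simps)
    then have "[int H * (3 * g) = h * (3 * g)] (mod 8 * int m)"
      by (simp only: cong_def mod_mult_self2)
    then have "[int H * (3 * g) = -1] (mod 8 * int m)"
      using assms(4) by (rule cong_trans)
    then obtain k where "-1 = int H * (3 * g) + 8 * int m * k"
      by (auto simp: cong_iff_lin)
    then show ?thesis
      using that[of "- k"] by (simp add: algebra_simps)
  qed
  ultimately have "48 * int m dvd exponent_defect1 (int H) g m" "48 * int m dvd exponent_defect2 (int H) g m"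
    using exponent_defects_dvd_nat assms(2,3) by blast+
  then show "48 * int m dvd exponent_defect1 h g m" "48 * int m dvd exponent_defect2 h g m"
    unfolding h exponent_defects_shift[OF assms(2)] by (simp_all add: dvd_add dvd_diff)
qed

lemma exp_pi_i_shift:
  fixes x y :: real and n :: int
  assumes "x = y + 2 * of_int n"
  shows "exp (of_real pi * \<i> * of_real x) = exp (of_real pi * \<i> * of_real y)"
proof -
  have "of_real pi * \<i> * of_real x = of_real pi * \<i> * of_real y + \<i> * (of_int n * (of_real pi * 2))"
    unfolding assms by (simp add: algebra_simps)
  then show ?thesis
    by (simp only: exp_plus_2pin)
qed

lemma exp_pi_i_plus_one: "exp (of_real pi * \<i> * of_real (y + 1)) = - exp (of_real pi * \<i> * of_real y)"
  by (simp add: distrib_left exp_add)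

lemma omega_quotient1:
  fixes h g h' :: int and k m :: nat
  assumes k: "k = 2 * m" "m > 0" and h': "h' = 3 * g" and dvd: "48 * int m dvd exponent_defect1 h g m"
  shows "omega (3 * h) (k div 2) * omega h (k div 2) * omega h k / omega (3 * h) k
      = exp (2 * complex_of_real pi * \<i> / (36 * of_nat k)
             * (of_int h * (9 + 9 * of_nat k) + of_int h' * (-5 + 2 * (of_nat k)^2)))"
proof -
  obtain n where n: "exponent_defect1 h g m = 48 * int m * n"
    using dvd by (elim dvdE)
  define y where "y = (h * (3 + 6 * real m) + g * (8 * (real m)^2 - 5)) / (12 * real m)"
  have exponent: "dedekind_sum (3 * h) m + dedekind_sum h m + dedekind_sum h (2 * m)
      - dedekind_sum (3 * h) (2 * m) = y + 2 * of_int n"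
  proof -
    have "dedekind_sum (3 * h) m + dedekind_sum h m + dedekind_sum h (2 * m)
        - dedekind_sum (3 * h) (2 * m)
      = real_of_int (2 * dedekind_num (3 * h) m + 2 * dedekind_num h m + dedekind_num h (2 * m)
          - dedekind_num (3 * h) (2 * m)) / (24 * real m)"
      using k(2) by (simp add: dedekind_sum_eq_num field_simps)
    also have "\<dots> = (48 * real m * n + 2 * (h * (3 + 6 * real m) + g * (8 * (real m)^2 - 5)))
        / (24 * real m)"
      using arg_cong[OF n, of real_of_int] unfolding exponent_defect1_def by simp
    also have "\<dots> = y + 2 * of_int n"
      using k(2) unfolding y_def by (simp add: field_simps)
    finally show ?thesis .
  qed
  have "omega (3 * h) m * omega h m * omega h (2 * m) / omega (3 * h) (2 * m)
      = exp (of_real pi * \<i> * of_real (dedekind_sum (3 * h) m + dedekind_sum h m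
          + dedekind_sum h (2 * m) - dedekind_sum (3 * h) (2 * m)))"
    unfolding omega_def by (simp add: exp_add[symmetric] exp_diff[symmetric] algebra_simps)
  also have "\<dots> = exp (of_real pi * \<i> * of_real y)"
    using exponent by (rule exp_pi_i_shift)
  also have "\<dots> = exp (2 * complex_of_real pi * \<i> / (36 * of_nat k)
             * (of_int h * (9 + 9 * of_nat k) + of_int h' * (-5 + 2 * (of_nat k)^2)))"
    using k(2) unfolding y_def k h' by (intro arg_cong[where f = exp]) (simp add: field_simps)
  finally show ?thesis
    using k by simp
qed

lemma omega_quotient2:
  fixes h g h' :: int and k m :: nat
  assumes k: "k = 2 * m" "m > 0" and h': "h' = 3 * g" and dvd: "48 * int m dvd exponent_defect2 h g m"
  shows "omega (3 * h) k * omega h (k div 2) * omega h k / (omega (3 * h) (k div 2))^3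
      = - exp (- (2 * complex_of_real pi * \<i> / (18 * of_nat k))
               * (of_int h * (9 + 9 * of_nat k) + of_int h' * (1 - (of_nat k)^2)))"
proof -
  obtain n where n: "exponent_defect2 h g m = 48 * int m * n"
    using dvd by (elim dvdE)
  define y where "y = - (h * (3 + 6 * real m) + g * (1 - 4 * (real m)^2)) / (6 * real m)"
  have exponent: "dedekind_sum (3 * h) (2 * m) + dedekind_sum h m + dedekind_sum h (2 * m)
      - 3 * dedekind_sum (3 * h) m = (y + 1) + 2 * of_int n"
  proof -
    have "dedekind_sum (3 * h) (2 * m) + dedekind_sum h m + dedekind_sum h (2 * m)
        - 3 * dedekind_sum (3 * h) m
      = real_of_int (dedekind_num (3 * h) (2 * m) + 2 * dedekind_num h m + dedekind_num h (2 * m)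
          - 6 * dedekind_num (3 * h) m) / (24 * real m)"
      using k(2) by (simp add: dedekind_sum_eq_num field_simps)
    also have "\<dots> = (48 * real m * n + 24 * real m
        - 4 * (h * (3 + 6 * real m) + g * (1 - 4 * (real m)^2))) / (24 * real m)"
      using arg_cong[OF n, of real_of_int] unfolding exponent_defect2_def by simp
    also have "\<dots> = (y + 1) + 2 * of_int n"
      using k(2) unfolding y_def by (simp add: field_simps)
    finally show ?thesis .
  qed
  have "omega (3 * h) (2 * m) * omega h m * omega h (2 * m) / (omega (3 * h) m)^3
      = exp (of_real pi * \<i> * of_real (dedekind_sum (3 * h) (2 * m) + dedekind_sum h m
          + dedekind_sum h (2 * m) - 3 * dedekind_sum (3 * h) m))"
    unfolding omega_def power3_eq_cube by (simp add: exp_add[symmetric] exp_diff[symmetric] algebra_simps)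
  also have "\<dots> = exp (of_real pi * \<i> * of_real (y + 1))"
    using exponent by (rule exp_pi_i_shift)
  also have "\<dots> = - exp (- (2 * complex_of_real pi * \<i> / (18 * of_nat k))
               * (of_int h * (9 + 9 * of_nat k) + of_int h' * (1 - (of_nat k)^2)))"
    unfolding exp_pi_i_plus_one using k(2) unfolding y_def k h'
    by (intro arg_cong[where f = "\<lambda>z. - exp z"]) (simp add: field_simps)
  finally show ?thesis
    using k by simp
qed

theorem lemma3p3:
  fixes k :: nat and h h' :: int
  assumes "gcd k 6 = 2"
    and "coprime h (int k)"
    and "[h * h' = -1] (mod (4 * int k))"
    and "3 dvd h'"
  shows "(omega (3*h) (k div 2) * omega h (k div 2) * omega h k / omega (3*h) k
           = exp (2 * complex_of_real pi * \<i> / (36 * of_nat k)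
                  * (of_int h * (9 + 9 * of_nat k) + of_int h' * (-5 + 2 * (of_nat k)^2))))
       \<and> (omega (3*h) k * omega h (k div 2) * omega h k / (omega (3*h) (k div 2))^3
           = - exp (- (2 * complex_of_real pi * \<i> / (18 * of_nat k))
                  * (of_int h * (9 + 9 * of_nat k) + of_int h' * (1 - (of_nat k)^2))))"
proof -
  obtain m where k: "k = 2 * m" "m > 0" "\<not> 3 dvd m"
  proof -
    have "2 dvd k" "\<not> 3 dvd k"
      using gcd_dvd1[of k 6] gcd_greatest[of 3 k 6] assms(1) by auto
    then obtain m where "k = 2 * m" "\<not> 3 dvd k"
      by (elim dvdE) simp
    then show thesis
      by (intro that[of m]) presburger+
  qed
  obtain g where h': "h' = 3 * g"
    using assms(4) by (elim dvdE)
  have "coprime h (2 * int m)" "[h * (3 * g) = -1] (mod 8 * int m)"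
    using assms(2,3) unfolding k h' by simp_all
  then have "48 * int m dvd exponent_defect1 h g m" "48 * int m dvd exponent_defect2 h g m"
    using exponent_defects_dvd k(2,3) by blast+
  then show ?thesis
    using omega_quotient1[OF k(1,2) h'] omega_quotient2[OF k(1,2) h'] by blast
qed

end
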